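(* Let $L$ be a multiplicative lattice, $n\ge1$, and $q$ a proper element of $L$. (1) If for all $a,b\in L$ with $a^nb\le q\le a\wedge b$ one has $a^n\le q$ or $a^{n-1}b\le q$, then $q$ is a strongly quasi $n$-absorbing element of $L$. (2) If for all $a_1,a_2,\dots,a_{n+1}\in L$ with $a_1a_2\cdots a_{n+1}\le q\le a_1\wedge a_2\wedge\cdots\wedge a_{n+1}$ one has $a_1\cdots a_{i-1}a_{i+1}\cdots a_{n+1}\le q$ for some $1\le i\le n+1$, then $q$ is a strongly quasi $n$-absorbing element of $L$.
   Context: A multiplicative lattice is a complete lattice $L$ with least element $0$ and compact greatest element $1$, equipped with a commutative, associative product that distributes over arbitrary joins and has $1$ as multiplicative identity. $a^0=1$. A proper element $q$ ($q<1$) is strongly quasi $n$-absorbing if whenever $a,b\in L$ (not necessarily compact) satisfy $a^nb\le q$, then $a^n\le q$ or $a^{n-1}b\le q$. *)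

theory Defs
  imports Main
begin

class multiplicative_lattice = complete_lattice + comm_monoid_mult +
  assumes one_eq_top: "1 = top"
  assumes mult_Sup_distrib: "a * Sup S = Sup ((\<lambda>s. a * s) ` S)"
  assumes top_compact: "top \<le> Sup S \<Longrightarrow> \<exists>T. finite T \<and> T \<subseteq> S \<and> top \<le> Sup T"

definition strongly_quasi_n_absorbing :: "nat \<Rightarrow> 'a::multiplicative_lattice \<Rightarrow> bool" where
  "strongly_quasi_n_absorbing n q \<longleftrightarrow> q < top \<and>
     (\<forall>a b. a ^ n * b \<le> q \<longrightarrow> a ^ n \<le> q \<or> a ^ (n - 1) * b \<le> q)"

end

theory Submission
  imports Defs
begin

text \<open>Replacing \<open>a\<close> and \<open>b\<close> by \<open>a \<squnion> q\<close> and \<open>b \<squnion> q\<close> costs nothing: every product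
  involving \<open>q\<close> lies below \<open>q\<close>, so \<open>a\<^sup>n b \<le> q\<close> gives \<open>(a \<squnion> q)\<^sup>n (b \<squnion> q) \<le> q\<close>, and the
  conclusions for the enlarged elements imply those for \<open>a\<close> and \<open>b\<close> by monotonicity. Hence it
  suffices to test the absorbing condition on elements above \<open>q\<close>, which is what both
  hypotheses provide (the second with the factors \<open>a, \<dots>, a, b\<close>).\<close>

unbundle lattice_syntax

lemma mult_sup_right: "(c::'a::multiplicative_lattice) * (a \<squnion> b) = c * a \<squnion> c * b"
  using mult_Sup_distrib[of c "{a, b}"] by simp

lemma mult_right_isotone: "(a::'a::multiplicative_lattice) \<le> b \<Longrightarrow> c * a \<le> c * b"
  by (metis mult_sup_right sup.absorb_iff2)

lemma mult_left_isotone: "(a::'a::multiplicative_lattice) \<le> b \<Longrightarrow> a * c \<le> b * c"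
  by (metis mult_right_isotone mult.commute)

lemma mult_isotone: "(a::'a::multiplicative_lattice) \<le> c \<Longrightarrow> b \<le> d \<Longrightarrow> a * b \<le> c * d"
  by (meson mult_right_isotone mult_left_isotone order_trans)

lemma mult_le_right_factor: "(x::'a::multiplicative_lattice) * q \<le> q"
  using mult_left_isotone[of x 1 q] one_eq_top by (metis mult_1 top_greatest)

lemma mult_le_left_factor: "(q::'a::multiplicative_lattice) * x \<le> q"
  using mult_le_right_factor by (metis mult.commute)

lemma power_isotone: "(a::'a::multiplicative_lattice) \<le> c \<Longrightarrow> a ^ k \<le> c ^ k"
  by (induction k) (simp_all add: mult_isotone)

lemma power_sup_le: "((a::'a::multiplicative_lattice) \<squnion> q) ^ k \<le> a ^ k \<squnion> q"
proof (induction k)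
  case 0
  then show ?case by simp
next
  case (Suc k)
  have "(a \<squnion> q) ^ Suc k \<le> (a \<squnion> q) * (a ^ k \<squnion> q)"
    using Suc mult_right_isotone by simp
  also have "\<dots> = (a * a ^ k \<squnion> a * q) \<squnion> (q * a ^ k \<squnion> q * q)"
    by (metis mult_sup_right mult.commute)
  also have "\<dots> \<le> a ^ Suc k \<squnion> q"
    using mult_le_right_factor[of a q] mult_le_left_factor[of q "a ^ k"] mult_le_left_factor[of q q]
    by (simp add: le_supI1 le_supI2)
  finally show ?case .
qed

lemma power_mult_sup_le:
  assumes "(a::'a::multiplicative_lattice) ^ n * b \<le> q"
  shows "(a \<squnion> q) ^ n * (b \<squnion> q) \<le> q"
proof -
  have "(a \<squnion> q) ^ n * (b \<squnion> q) \<le> (a ^ n \<squnion> q) * (b \<squnion> q)"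
    using power_sup_le mult_left_isotone by blast
  also have "\<dots> = (a ^ n * b \<squnion> a ^ n * q) \<squnion> (q * b \<squnion> q * q)"
    by (metis mult_sup_right mult.commute)
  also have "\<dots> \<le> q"
    using assms mult_le_right_factor[of "a ^ n" q] mult_le_left_factor[of q b]
      mult_le_left_factor[of q q]
    by simp
  finally show ?thesis .
qed

lemma strongly_quasi_n_absorbing_iff_above:
  "strongly_quasi_n_absorbing n q \<longleftrightarrow> q < top \<and>
     (\<forall>a b. a ^ n * b \<le> q \<and> q \<le> a \<sqinter> b \<longrightarrow> a ^ n \<le> q \<or> a ^ (n - 1) * b \<le> q)"
  (is "_ \<longleftrightarrow> q < top \<and> ?above")
proof
  assume "strongly_quasi_n_absorbing n q"
  then show "q < top \<and> ?above"
    unfolding strongly_quasi_n_absorbing_def by blast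
next
  assume above: "q < top \<and> ?above"
  show "strongly_quasi_n_absorbing n q"
    unfolding strongly_quasi_n_absorbing_def
  proof (intro conjI allI impI)
    show "q < top"
      using above by blast
    fix a b
    assume "a ^ n * b \<le> q"
    then have "(a \<squnion> q) ^ n * (b \<squnion> q) \<le> q"
      by (rule power_mult_sup_le)
    then have "(a \<squnion> q) ^ n \<le> q \<or> (a \<squnion> q) ^ (n - 1) * (b \<squnion> q) \<le> q"
      using above[THEN conjunct2, rule_format, of "a \<squnion> q" "b \<squnion> q"]
      by simp
    then show "a ^ n \<le> q \<or> a ^ (n - 1) * b \<le> q"
      by (meson power_isotone mult_isotone sup_ge1 order_trans)
  qed
qed

lemma prod_remove_index_power:
  fixes a b :: "'a::comm_monoid_mult"
  assumes "i \<in> {1..n+1}"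
  shows "(\<Prod>j\<in>{1..n+1} - {i}. if j = n + 1 then b else a)
           = (if i = n + 1 then a ^ n else a ^ (n - 1) * b)"
proof (cases "i = n + 1")
  case True
  then have "{1..n+1} - {i} = {1..n}"
    by auto
  with True show ?thesis
    by simp
next
  case False
  with assms have "{1..n+1} - {i} = insert (n + 1) ({1..n} - {i})"
    by auto
  moreover from assms False have "card ({1..n} - {i}) = n - 1"
    by auto
  ultimately show ?thesis
    using False by (simp add: mult.commute)
qed

lemma prod_power_mult:
  fixes a b :: "'a::comm_monoid_mult"
  shows "(\<Prod>j\<in>{1..n+1}. if j = n + 1 then b else a) = a ^ n * b"
proof -
  have "{1..n+1} = insert (n + 1) {1..n}"
    by auto
  then show ?thesis
    by (simp add: mult.commute)
qed

theorem mainTheorem15: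
  fixes q :: "'a::multiplicative_lattice" and n :: nat
  assumes "n \<ge> 1" and "q < top"
  shows "((\<forall>a b. a ^ n * b \<le> q \<and> q \<le> inf a b \<longrightarrow> a ^ n \<le> q \<or> a ^ (n - 1) * b \<le> q)
            \<longrightarrow> strongly_quasi_n_absorbing n q)
       \<and> ((\<forall>x :: nat \<Rightarrow> 'a. prod x {1..n+1} \<le> q \<and> q \<le> Inf (x ` {1..n+1})
              \<longrightarrow> (\<exists>i\<in>{1..n+1}. prod x ({1..n+1} - {i}) \<le> q))
            \<longrightarrow> strongly_quasi_n_absorbing n q)"
proof (intro conjI impI)
  show "strongly_quasi_n_absorbing n q"
    if "\<forall>a b. a ^ n * b \<le> q \<and> q \<le> a \<sqinter> b \<longrightarrow> a ^ n \<le> q \<or> a ^ (n - 1) * b \<le> q"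
    using that \<open>q < top\<close> strongly_quasi_n_absorbing_iff_above by blast
next
  assume deleting: "\<forall>x :: nat \<Rightarrow> 'a. prod x {1..n+1} \<le> q \<and> q \<le> Inf (x ` {1..n+1})
              \<longrightarrow> (\<exists>i\<in>{1..n+1}. prod x ({1..n+1} - {i}) \<le> q)"
  have "a ^ n \<le> q \<or> a ^ (n - 1) * b \<le> q" if "a ^ n * b \<le> q" "q \<le> a \<sqinter> b" for a b
  proof -
    let ?x = "\<lambda>j. if j = n + 1 then b else a"
    have "prod ?x {1..n+1} \<le> q"
      using that(1) by (simp only: prod_power_mult)
    moreover have "q \<le> Inf (?x ` {1..n+1})"
      using that(2) by (auto intro!: Inf_greatest)
    ultimately obtain i where i: "i \<in> {1..n+1}" and "prod ?x ({1..n+1} - {i}) \<le> q"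
      using deleting by blast
    moreover have "prod ?x ({1..n+1} - {i}) = (if i = n + 1 then a ^ n else a ^ (n - 1) * b)"
      using i by (rule prod_remove_index_power)
    ultimately show ?thesis
      by (auto split: if_splits)
  qed
  then show "strongly_quasi_n_absorbing n q"
    using \<open>q < top\<close> strongly_quasi_n_absorbing_iff_above by blast
qed

end
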